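(* Let $R=K[X_1,\dots,X_d]$ be a polynomial ring over a field $K$ and let $\mathcal{F}_{ij}$ be a monomial ideal of $R$ for each $i=1,\dots,r$ and $j=1,\dots,s$. For $\mathbf{n}\in\mathbb{N}^r$ set $\mathcal{F}_j^{\mathbf{n}}=\mathcal{F}_{1j}^{n_1}\cdots\mathcal{F}_{rj}^{n_r}$. Then $\bigoplus_{\mathbf{n}\in\mathbb{N}^r}\left(\bigcap_{j=1}^s\mathcal{F}_j^{\mathbf{n}}\right)t_1^{n_1}\cdots t_r^{n_r}\subseteq R[t_1,\dots,t_r]$ is an $\mathbb{N}^r$-graded Noetherian $R$-algebra.
   Context: $t_1,\dots,t_r$ are indeterminates over $R$. *)

theory Defs
  imports "HOL-Library.Poly_Mapping" "HOL-Algebra.Ring_Divisibility"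
begin

(* Polynomial ring over a field in the finitely many variables indexed by the
  finite type 'v: monomials are exponent vectors 'v \<Rightarrow>\<^sub>0 nat. *)
type_synonym ('v, 'k) mpoly = "('v \<Rightarrow>\<^sub>0 nat) \<Rightarrow>\<^sub>0 'k"

definition ideal_gen :: "'a::comm_ring_1 set \<Rightarrow> 'a set" where
  "ideal_gen S = {x. \<exists>T c. finite T \<and> T \<subseteq> S \<and> x = (\<Sum>s\<in>T. c s * s)}"

definition is_ideal :: "'a::comm_ring_1 set \<Rightarrow> bool" where
  "is_ideal I \<longleftrightarrow> 0 \<in> I \<and> (\<forall>a\<in>I. \<forall>b\<in>I. a + b \<in> I) \<and> (\<forall>r a. a \<in> I \<longrightarrow> r * a \<in> I)"

definition monomial_ideal :: "('v, 'k::field) mpoly set \<Rightarrow> bool" where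
  "monomial_ideal I \<longleftrightarrow> is_ideal I \<and>
     (\<exists>M. M \<subseteq> range (\<lambda>m. Poly_Mapping.single m 1) \<and> I = ideal_gen M)"

definition ideal_mult :: "'a::comm_ring_1 set \<Rightarrow> 'a set \<Rightarrow> 'a set" where
  "ideal_mult I J = ideal_gen {a * b | a b. a \<in> I \<and> b \<in> J}"

fun ideal_pow :: "'a::comm_ring_1 set \<Rightarrow> nat \<Rightarrow> 'a set" where
  "ideal_pow I 0 = UNIV"
| "ideal_pow I (Suc n) = ideal_mult I (ideal_pow I n)"

definition ideal_prod :: "('i \<Rightarrow> 'a::comm_ring_1 set) \<Rightarrow> 'i set \<Rightarrow> 'a set" where
  "ideal_prod J A = ideal_gen {(\<Prod>i\<in>A. a i) | a. \<forall>i\<in>A. a i \<in> J i}"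

definition multi_pow :: "('i::finite \<Rightarrow> 'j \<Rightarrow> 'a::comm_ring_1 set) \<Rightarrow> 'j \<Rightarrow> ('i \<Rightarrow>\<^sub>0 nat) \<Rightarrow> 'a set" where
  "multi_pow F j n = ideal_prod (\<lambda>i. ideal_pow (F i j) (Poly_Mapping.lookup n i)) UNIV"

(* The algebra \<Oplus>_n (\<Inter>_j F_j^n) t^n inside R[t_i : i], elements of R[t] being
  polynomials in the variables t indexed by 'i with coefficients in R. *)
definition rees_alg :: "('i::finite \<Rightarrow> 'j \<Rightarrow> ('v, 'k::field) mpoly set)
     \<Rightarrow> (('i \<Rightarrow>\<^sub>0 nat) \<Rightarrow>\<^sub>0 ('v, 'k) mpoly) set" where
  "rees_alg F = {f. \<forall>n. Poly_Mapping.lookup f n \<in> (\<Inter>j. multi_pow F j n)}"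

definition sub_ring_struct :: "'a::comm_ring_1 set \<Rightarrow> 'a ring" where
  "sub_ring_struct A = \<lparr>carrier = A, monoid.mult = (*), one = 1, zero = 0, add = (+)\<rparr>"

end

theory Submission
  imports Defs
    "HOL-Library.Set_Algebras" "HOL-Library.Product_Plus" "HOL-Library.Function_Algebras"
    "HOL-Library.Multiset_Order" "HOL-Library.Countable"
begin

(* Each F_ij is spanned by the monomials X^a with a in an upper set G_ij + \<nat>^d, where G_ij can be
   taken finite by Dickson's lemma. Products of such ideals are of the same form, so the algebra is
   the monoid ring K[S] of S = {(n, a). \<forall>j. a \<in> \<Sum>_i n_i G_ij + \<nat>^d} \<subseteq> \<nat>^r \<times> \<nat>^d.
   S is the image, under an additive projection, of the natural solutions of a homogeneous linear
   system. These are closed under differences of comparable solutions, so Dickson's lemma shows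
   that every E \<subseteq> S satisfies E \<subseteq> B + S for some finite B \<subseteq> E. For a monomial order, the
   leading exponents of an ideal of K[S] form a subset of S closed under + S, and ideals I \<subseteq> J
   with the same leading exponents coincide; hence ascending chains of ideals stabilise. *)

abbreviation lookup :: "('a \<Rightarrow>\<^sub>0 'b::zero) \<Rightarrow> 'a \<Rightarrow> 'b" where
  "lookup \<equiv> Poly_Mapping.lookup"

abbreviation keys :: "('a \<Rightarrow>\<^sub>0 'b::zero) \<Rightarrow> 'a set" where
  "keys \<equiv> Poly_Mapping.keys"

section \<open>Monomial ideals\<close>

lemma ideal_gen_add:
  assumes "x \<in> ideal_gen S" and "y \<in> ideal_gen S"
  shows "x + y \<in> ideal_gen S"
proof -
  obtain T c where T: "finite T" "T \<subseteq> S" "x = (\<Sum>s\<in>T. c s * s)"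
    using assms(1) unfolding ideal_gen_def by blast
  obtain U d where U: "finite U" "U \<subseteq> S" "y = (\<Sum>s\<in>U. d s * s)"
    using assms(2) unfolding ideal_gen_def by blast
  define c' where "c' s = (if s \<in> T then c s else 0)" for s
  define d' where "d' s = (if s \<in> U then d s else 0)" for s
  have "x = (\<Sum>s\<in>T \<union> U. c' s * s)"
    unfolding T(3) using T U by (intro sum.mono_neutral_cong_left) (auto simp: c'_def)
  moreover have "y = (\<Sum>s\<in>T \<union> U. d' s * s)"
    unfolding U(3) using T U by (intro sum.mono_neutral_cong_left) (auto simp: d'_def)
  ultimately
  have "x + y = (\<Sum>s\<in>T \<union> U. (c' s + d' s) * s)"
    by (simp only: sum.distrib distrib_right)
  then show ?thesis
    using T U unfolding ideal_gen_def
    by (intro CollectI exI[of _ "T \<union> U"] exI[of _ "\<lambda>s. c' s + d' s"]) auto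
qed

lemma ideal_gen_mult:
  assumes "x \<in> ideal_gen S"
  shows "r * x \<in> ideal_gen S"
proof -
  obtain T c where T: "finite T" "T \<subseteq> S" "x = (\<Sum>s\<in>T. c s * s)"
    using assms unfolding ideal_gen_def by blast
  then have "r * x = (\<Sum>s\<in>T. (r * c s) * s)"
    by (simp add: sum_distrib_left mult.assoc)
  then show ?thesis
    using T unfolding ideal_gen_def by (intro CollectI exI[of _ T] exI[of _ "\<lambda>s. r * c s"]) auto
qed

lemma is_ideal_ideal_gen: "is_ideal (ideal_gen S)"
proof -
  have "0 \<in> ideal_gen S"
    unfolding ideal_gen_def by (auto intro!: exI[of _ "{}"])
  then show ?thesis
    unfolding is_ideal_def by (blast intro: ideal_gen_add ideal_gen_mult)
qed

lemma ideal_gen_base: "s \<in> S \<Longrightarrow> s \<in> ideal_gen S"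
  unfolding ideal_gen_def by (auto intro!: exI[of _ "{s}"] exI[of _ "\<lambda>_. 1"])

lemma is_ideal_sum:
  assumes "is_ideal I" and "\<And>x. x \<in> X \<Longrightarrow> f x \<in> I"
  shows "sum f X \<in> I"
  using assms(2)
  by (induction X rule: infinite_finite_induct) (use assms(1) in \<open>auto simp: is_ideal_def\<close>)

lemma ideal_gen_least:
  assumes "is_ideal I" and "S \<subseteq> I"
  shows "ideal_gen S \<subseteq> I"
proof
  fix x assume "x \<in> ideal_gen S"
  then obtain T c where "T \<subseteq> S" "x = (\<Sum>s\<in>T. c s * s)"
    unfolding ideal_gen_def by blast
  with assms show "x \<in> I"
    by (auto intro!: is_ideal_sum simp: is_ideal_def)
qed

definition exponent_ideal :: "'m::comm_monoid_add set \<Rightarrow> ('m \<Rightarrow>\<^sub>0 'k::comm_ring_1) set" where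
  "exponent_ideal M = {p. keys p \<subseteq> M + UNIV}"

lemma UNIV_plus_UNIV [simp]: "UNIV + UNIV = (UNIV :: 'm::comm_monoid_add set)"
  using set_plus_intro[of _ UNIV 0 UNIV] by fastforce

lemma keys_mult_subset: "keys (p * q) \<subseteq> keys p + keys q"
  using keys_mult[of p q] unfolding set_plus_def by blast

lemma keys_prod_subset:
  "keys (\<Prod>i\<in>X. a i :: 'm::comm_monoid_add \<Rightarrow>\<^sub>0 'k::comm_ring_1) \<subseteq> (\<Sum>i\<in>X. keys (a i))"
proof (induction X rule: infinite_finite_induct)
  case (insert x X)
  have "keys (a x * (\<Prod>i\<in>X. a i)) \<subseteq> keys (a x) + (\<Sum>i\<in>X. keys (a i))"
    using keys_mult_subset set_plus_mono2[OF order_refl insert.IH] by (rule order_trans)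
  with insert.hyps show ?case
    by simp
qed auto

lemma upper_set_plus_left: "UNIV + (M + UNIV) = M + (UNIV :: 'm::comm_monoid_add set)"
  by (metis UNIV_plus_UNIV add.left_commute)

lemma upper_set_plus: "(A + UNIV) + (B + UNIV) = A + B + (UNIV :: 'm::comm_monoid_add set)"
  by (metis UNIV_plus_UNIV add.assoc add.commute)

lemma is_ideal_exponent_ideal: "is_ideal (exponent_ideal M)"
proof -
  have mult: "keys (r * p) \<subseteq> M + UNIV" if "keys p \<subseteq> M + UNIV" for r p :: "'a \<Rightarrow>\<^sub>0 'b"
    using order_trans[OF keys_mult_subset set_plus_mono2[OF subset_UNIV that]]
    by (simp only: upper_set_plus_left)
  have add: "keys (p + q) \<subseteq> M + UNIV"
    if "keys p \<subseteq> M + UNIV" "keys q \<subseteq> M + UNIV" for p q :: "'a \<Rightarrow>\<^sub>0 'b"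
    using keys_add[of p q] that by blast
  show ?thesis
    unfolding is_ideal_def exponent_ideal_def by (simp add: add mult)
qed

lemma monomial_in_exponent_ideal: "m \<in> M \<Longrightarrow> Poly_Mapping.single m 1 \<in> exponent_ideal M"
  unfolding exponent_ideal_def by (auto intro: set_plus_intro[of m M 0, simplified])

lemma poly_mapping_sum_singles: "p = (\<Sum>a\<in>keys p. Poly_Mapping.single a (lookup p a))"
  by (rule poly_mapping_eqI) (simp add: lookup_sum lookup_single when_def in_keys_iff)

lemma ideal_gen_monomials:
  "ideal_gen ((\<lambda>m. Poly_Mapping.single m 1) ` M) =
    (exponent_ideal M :: ('m::comm_monoid_add \<Rightarrow>\<^sub>0 'k::comm_ring_1) set)"
proof
  show "ideal_gen ((\<lambda>m. Poly_Mapping.single m 1) ` M) \<subseteq> (exponent_ideal M :: ('m \<Rightarrow>\<^sub>0 'k) set)"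
    by (rule ideal_gen_least) (auto intro: is_ideal_exponent_ideal monomial_in_exponent_ideal)
  show "exponent_ideal M \<subseteq> ideal_gen ((\<lambda>m. Poly_Mapping.single m 1 :: 'm \<Rightarrow>\<^sub>0 'k) ` M)"
  proof
    fix p :: "'m \<Rightarrow>\<^sub>0 'k" assume p: "p \<in> exponent_ideal M"
    have "Poly_Mapping.single a (lookup p a) \<in> ideal_gen ((\<lambda>m. Poly_Mapping.single m 1) ` M)"
      if "a \<in> keys p" for a
    proof -
      obtain m d where "m \<in> M" "a = m + d"
        using \<open>a \<in> keys p\<close> p unfolding exponent_ideal_def set_plus_def by blast
      then have "Poly_Mapping.single a (lookup p a) =
        Poly_Mapping.single d (lookup p a) * Poly_Mapping.single m 1"
        by (simp add: mult_single add.commute)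
      then show ?thesis
        using \<open>m \<in> M\<close> by (metis ideal_gen_base ideal_gen_mult imageI)
    qed
    then show "p \<in> ideal_gen ((\<lambda>m. Poly_Mapping.single m 1) ` M)"
      by (subst poly_mapping_sum_singles) (auto intro: is_ideal_sum is_ideal_ideal_gen)
  qed
qed

lemma exponent_ideal_zero: "exponent_ideal {0} = UNIV"
  by (simp add: exponent_ideal_def)

lemma ideal_mult_exponent_ideal:
  "ideal_mult (exponent_ideal A) (exponent_ideal B) =
    (exponent_ideal (A + B) :: ('m::comm_monoid_add \<Rightarrow>\<^sub>0 'k::comm_ring_1) set)"
proof
  have "keys (p * q) \<subseteq> A + B + UNIV" if "p \<in> exponent_ideal A" "q \<in> exponent_ideal B" for p q :: "'m \<Rightarrow>\<^sub>0 'k"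
    using that keys_mult_subset[of p q] set_plus_mono2[of "keys p" _ "keys q"] upper_set_plus[of A B]
    unfolding exponent_ideal_def by blast
  then show "ideal_mult (exponent_ideal A) (exponent_ideal B) \<subseteq> (exponent_ideal (A + B) :: ('m \<Rightarrow>\<^sub>0 'k) set)"
    unfolding ideal_mult_def exponent_ideal_def
    by (intro ideal_gen_least is_ideal_exponent_ideal[unfolded exponent_ideal_def]) blast
  have "Poly_Mapping.single (a + b) 1 \<in> ideal_mult (exponent_ideal A) (exponent_ideal B :: ('m \<Rightarrow>\<^sub>0 'k) set)"
    if "a \<in> A" "b \<in> B" for a b
  proof -
    have "Poly_Mapping.single (a + b) (1::'k) = Poly_Mapping.single a 1 * Poly_Mapping.single b 1"
      by (simp add: mult_single)
    then show ?thesis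
      unfolding ideal_mult_def using that by (auto intro!: ideal_gen_base monomial_in_exponent_ideal)
  qed
  then show "exponent_ideal (A + B) \<subseteq> ideal_mult (exponent_ideal A) (exponent_ideal B :: ('m \<Rightarrow>\<^sub>0 'k) set)"
    unfolding ideal_gen_monomials[symmetric] ideal_mult_def
    by (intro ideal_gen_least is_ideal_ideal_gen) (auto simp: set_plus_def)
qed

lemma ideal_pow_exponent_ideal:
  "ideal_pow (exponent_ideal A) n =
    (exponent_ideal (\<Sum>_<n. A) :: ('m::comm_monoid_add \<Rightarrow>\<^sub>0 'k::comm_ring_1) set)"
  by (induction n) (simp_all add: exponent_ideal_zero ideal_mult_exponent_ideal add.commute)

lemma prod_single_one:
  "(\<Prod>i\<in>X. Poly_Mapping.single (x i) 1) = Poly_Mapping.single (\<Sum>i\<in>X. x i) (1::'k::comm_semiring_1)"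
  by (induction X rule: infinite_finite_induct) (simp_all add: mult_single)

lemma ideal_prod_exponent_ideal:
  assumes "finite X"
  shows "ideal_prod (\<lambda>i. exponent_ideal (B i)) X =
    (exponent_ideal (\<Sum>i\<in>X. B i) :: ('m::comm_monoid_add \<Rightarrow>\<^sub>0 'k::comm_ring_1) set)"
proof
  have "keys (\<Prod>i\<in>X. a i) \<subseteq> (\<Sum>i\<in>X. B i) + UNIV"
    if "\<forall>i\<in>X. a i \<in> exponent_ideal (B i)" for a :: "_ \<Rightarrow> 'm \<Rightarrow>\<^sub>0 'k"
  proof -
    have "(\<Sum>i\<in>X. keys (a i)) \<subseteq> (\<Sum>i\<in>X. B i + UNIV)"
      using that unfolding exponent_ideal_def set_sum_alt[OF assms] by blast
    also have "\<dots> = (\<Sum>i\<in>X. B i) + (\<Sum>i\<in>X. UNIV)"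
      by (rule sum.distrib)
    also have "\<dots> \<subseteq> (\<Sum>i\<in>X. B i) + UNIV"
      by (rule set_plus_mono2) simp_all
    finally show ?thesis
      using keys_prod_subset by blast
  qed
  then show "ideal_prod (\<lambda>i. exponent_ideal (B i)) X \<subseteq> (exponent_ideal (\<Sum>i\<in>X. B i) :: ('m \<Rightarrow>\<^sub>0 'k) set)"
    unfolding ideal_prod_def
    by (intro ideal_gen_least is_ideal_exponent_ideal) (auto simp: exponent_ideal_def)
  have "Poly_Mapping.single (\<Sum>i\<in>X. x i) 1 \<in> ideal_prod (\<lambda>i. exponent_ideal (B i) :: ('m \<Rightarrow>\<^sub>0 'k) set) X"
    if "\<forall>i\<in>X. x i \<in> B i" for x
    unfolding ideal_prod_def prod_single_one[symmetric]
    using that by (blast intro: ideal_gen_base monomial_in_exponent_ideal)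
  then show "exponent_ideal (\<Sum>i\<in>X. B i) \<subseteq> ideal_prod (\<lambda>i. exponent_ideal (B i) :: ('m \<Rightarrow>\<^sub>0 'k) set) X"
    unfolding ideal_gen_monomials[symmetric] set_sum_alt[OF assms]
    by (intro ideal_gen_least) (auto simp: ideal_prod_def is_ideal_ideal_gen)
qed

lemma multi_pow_exponent_ideal:
  fixes F :: "'i::finite \<Rightarrow> 'j \<Rightarrow> ('m::comm_monoid_add \<Rightarrow>\<^sub>0 'k::comm_ring_1) set"
  assumes "\<And>i. F i j = exponent_ideal (G i j)"
  shows "multi_pow F j n = exponent_ideal (\<Sum>i\<in>UNIV. \<Sum>_<lookup n i. G i j)"
  unfolding multi_pow_def assms ideal_pow_exponent_ideal by (rule ideal_prod_exponent_ideal[OF finite_UNIV])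

lemma Dickson_lemma:
  fixes X :: "('a \<Rightarrow> nat) set"
  assumes "finite K"
  shows "\<exists>B\<subseteq>X. finite B \<and> (\<forall>f\<in>X. \<exists>g\<in>B. \<forall>k\<in>K. g k \<le> f k)"
  using assms
proof (induction K arbitrary: X rule: finite_induct)
  case empty
  show ?case
  proof (cases "X = {}")
    case False
    then obtain x where "x \<in> X" by blast
    then show ?thesis by (intro exI[of _ "{x}"]) auto
  qed simp
next
  case (insert k K)
  obtain B where B: "B \<subseteq> X" "finite B" "\<forall>f\<in>X. \<exists>g\<in>B. \<forall>k\<in>K. g k \<le> f k"
    using insert.IH by blast
  have "\<forall>v. \<exists>C\<subseteq>{f\<in>X. f k = v}. finite C \<and> (\<forall>f\<in>{f\<in>X. f k = v}. \<exists>g\<in>C. \<forall>k\<in>K. g k \<le> f k)"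
    using insert.IH by blast
  from choice[OF this] obtain C where
    "\<forall>v. C v \<subseteq> {f\<in>X. f k = v} \<and> finite (C v) \<and> (\<forall>f\<in>{f\<in>X. f k = v}. \<exists>g\<in>C v. \<forall>k\<in>K. g k \<le> f k)"
    by blast
  then have C: "\<And>v. C v \<subseteq> {f\<in>X. f k = v}" "\<And>v. finite (C v)"
    "\<And>v. \<forall>f\<in>{f\<in>X. f k = v}. \<exists>g\<in>C v. \<forall>k\<in>K. g k \<le> f k"
    by simp_all
  define b where "b = (\<Sum>g\<in>B. g k)"
  have "\<exists>g\<in>B \<union> (\<Union>v\<le>b. C v). \<forall>k'\<in>insert k K. g k' \<le> f k'" if "f \<in> X" for f
  proof -
    obtain g where g: "g \<in> B" "\<forall>k\<in>K. g k \<le> f k"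
      using B(3) \<open>f \<in> X\<close> by blast
    show ?thesis
    proof (cases "g k \<le> f k")
      case False
      have "g k \<le> b"
        unfolding b_def by (rule member_le_sum[OF g(1) _ B(2)]) simp
      obtain h where "h \<in> C (f k)" "\<forall>k\<in>K. h k \<le> f k"
        using C(3) \<open>f \<in> X\<close> by blast
      moreover have "h k = f k" "f k \<le> b"
        using C(1) \<open>h \<in> C (f k)\<close> \<open>g k \<le> b\<close> False by auto
      ultimately show ?thesis
        by (intro bexI[of _ h]) auto
    qed (use g in auto)
  qed
  moreover have "B \<union> (\<Union>v\<le>b. C v) \<subseteq> X"
    using B(1) C(1) by blast
  moreover have "finite (B \<union> (\<Union>v\<le>b. C v))"
    using B(2) C(2) by blast
  ultimately show ?case
    by blast
qed

lemma finite_generators_upper_set: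
  fixes M :: "('v::finite \<Rightarrow>\<^sub>0 nat) set"
  shows "\<exists>G\<subseteq>M. finite G \<and> G + UNIV = M + UNIV"
proof -
  obtain B where B: "B \<subseteq> lookup ` M" "finite B" "\<forall>f\<in>lookup ` M. \<exists>g\<in>B. \<forall>v\<in>UNIV. g v \<le> f v"
    using Dickson_lemma[of UNIV "lookup ` M"] by auto
  obtain G where G: "G \<subseteq> M" "finite G" "B = lookup ` G"
    using B(1,2) finite_subset_image by metis
  have "m \<in> G + UNIV" if "m \<in> M" for m
  proof -
    obtain g where "g \<in> G" "\<forall>v. lookup g v \<le> lookup m v"
      using B(3) G(3) \<open>m \<in> M\<close> by auto
    then have "m = g + (m - g)"
      by (intro poly_mapping_eqI) (simp add: lookup_add lookup_minus)
    then show ?thesis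
      using \<open>g \<in> G\<close> set_plus_intro[of g G "m - g" UNIV] by simp
  qed
  then have "M + UNIV \<subseteq> (G + UNIV) + UNIV"
    by (intro set_plus_mono2) auto
  then have "M + UNIV \<subseteq> G + UNIV"
    by (simp add: add.assoc)
  moreover have "G + UNIV \<subseteq> M + UNIV"
    using G(1) by (rule set_plus_mono2) simp
  ultimately show ?thesis
    using G by blast
qed

lemma monomial_ideal_finite_exponents:
  fixes I :: "('v::finite, 'k::field) mpoly set"
  assumes "monomial_ideal I"
  shows "\<exists>G. finite G \<and> I = exponent_ideal G"
proof -
  obtain M where M: "M \<subseteq> range (\<lambda>m. Poly_Mapping.single m 1)" "I = ideal_gen M"
    using assms unfolding monomial_ideal_def by blast
  define M0 where "M0 = {m. Poly_Mapping.single m 1 \<in> M}"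
  have "M = (\<lambda>m. Poly_Mapping.single m 1) ` M0"
    using M(1) unfolding M0_def by auto
  then have "I = exponent_ideal M0"
    unfolding M(2) by (simp only: ideal_gen_monomials)
  moreover obtain G where "finite G" "G + UNIV = M0 + UNIV"
    using finite_generators_upper_set by blast
  ultimately show ?thesis
    unfolding exponent_ideal_def by auto
qed

section \<open>Noetherian monoids\<close>

definition noetherian_monoid :: "'a::comm_monoid_add set \<Rightarrow> bool" where
  "noetherian_monoid S \<longleftrightarrow> 0 \<in> S \<and> S + S \<subseteq> S \<and> (\<forall>E\<subseteq>S. \<exists>B\<subseteq>E. finite B \<and> E \<subseteq> B + S)"

lemma noetherian_monoid_additive_image:
  fixes T :: "('x \<Rightarrow> nat) set" and \<pi> :: "('x \<Rightarrow> nat) \<Rightarrow> 'a::comm_monoid_add"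
  assumes "finite K" and support: "\<And>t x. t \<in> T \<Longrightarrow> x \<notin> K \<Longrightarrow> t x = 0"
    and "0 \<in> T" and add: "\<And>s t. s \<in> T \<Longrightarrow> t \<in> T \<Longrightarrow> s + t \<in> T"
    and diff: "\<And>s t. s \<in> T \<Longrightarrow> t \<in> T \<Longrightarrow> s \<le> t \<Longrightarrow> t - s \<in> T"
    and "\<pi> 0 = 0" and \<pi>_add: "\<And>s t. \<pi> (s + t) = \<pi> s + \<pi> t"
  shows "noetherian_monoid (\<pi> ` T)"
proof -
  have "\<exists>B\<subseteq>E. finite B \<and> E \<subseteq> B + \<pi> ` T" if "E \<subseteq> \<pi> ` T" for E
  proof -
    obtain D where D: "D \<subseteq> {t\<in>T. \<pi> t \<in> E}" "finite D"
      "\<forall>t\<in>{t\<in>T. \<pi> t \<in> E}. \<exists>s\<in>D. \<forall>x\<in>K. s x \<le> t x"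
      using Dickson_lemma[OF \<open>finite K\<close>, of "{t\<in>T. \<pi> t \<in> E}"] by blast
    have "e \<in> \<pi> ` D + \<pi> ` T" if "e \<in> E" for e
    proof -
      obtain t where t: "t \<in> T" "e = \<pi> t"
        using \<open>e \<in> E\<close> \<open>E \<subseteq> \<pi> ` T\<close> by blast
      then obtain s where s: "s \<in> D" "\<forall>x\<in>K. s x \<le> t x"
        using D(3) \<open>e \<in> E\<close> by blast
      have "s \<in> T"
        using s(1) D(1) by blast
      have "s \<le> t"
        unfolding le_fun_def using s(2) support[OF \<open>s \<in> T\<close>] by (metis le0)
      then have "t = s + (t - s)"
        by (simp add: le_fun_def fun_eq_iff)
      then have "e = \<pi> s + \<pi> (t - s)"
        using t(2) \<pi>_add by metis
      moreover have "t - s \<in> T"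
        using diff \<open>s \<in> T\<close> \<open>t \<in> T\<close> \<open>s \<le> t\<close> by blast
      ultimately show ?thesis
        using s(1) by (auto intro: set_plus_intro)
    qed
    moreover have "\<pi> ` D \<subseteq> E"
      using D(1) by blast
    ultimately show ?thesis
      using D(2) by (intro exI[of _ "\<pi> ` D"]) auto
  qed
  moreover have "0 \<in> \<pi> ` T"
    using \<open>0 \<in> T\<close> \<open>\<pi> 0 = 0\<close> by (metis image_eqI)
  moreover have "\<pi> ` T + \<pi> ` T \<subseteq> \<pi> ` T"
    using add \<pi>_add by (auto simp: set_plus_def intro!: image_eqI[of _ \<pi>, OF \<pi>_add[symmetric]])
  ultimately show ?thesis
    unfolding noetherian_monoid_def by blast
qed

lemma additive_eq_diff:
  fixes L R :: "('x \<Rightarrow> nat) \<Rightarrow> 'a::cancel_comm_monoid_add"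
  assumes "\<And>s t. L (s + t) = L s + L t" and "\<And>s t. R (s + t) = R s + R t"
    and "L s = R s" and "L t = R t" and "s \<le> t"
  shows "L (t - s) = R (t - s)"
proof -
  have "t = s + (t - s)"
    using \<open>s \<le> t\<close> by (simp add: le_fun_def fun_eq_iff)
  then have "L s + L (t - s) = R s + R (t - s)"
    using assms(1,2,4) by metis
  then show ?thesis
    using assms(3) by simp
qed

section \<open>The exponent monoid of the Rees algebra\<close>

lemma set_sum_const_eq_combinations:
  fixes G :: "'a::comm_monoid_add set"
  assumes "finite G"
  shows "(\<Sum>_<k::nat. G) = {\<Sum>m\<in>G. \<Sum>_<c m. m | c. sum c G = k}"
proof (induction k)
  case 0
  have "(\<Sum>m\<in>G. \<Sum>_<c m. m) = 0" if "sum c G = 0" for c :: "'a \<Rightarrow> nat"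
    using that assms by simp
  then show ?case
    by (auto intro!: exI[of _ "\<lambda>_. 0"])
next
  case (Suc k)
  have step: "(\<Sum>m\<in>G. \<Sum>_<c m + (if m = g then 1 else 0). m) = (\<Sum>m\<in>G. \<Sum>_<c m. m) + g"
    "sum (\<lambda>m. c m + (if m = g then 1 else 0)) G = sum c G + 1" if "g \<in> G" for c :: "'a \<Rightarrow> nat" and g
  proof -
    have "(\<Sum>_<c m + (if m = g then 1 else 0). m) = (\<Sum>_<c m. m) + (if m = g then m else 0)" for m
      by simp
    then show "(\<Sum>m\<in>G. \<Sum>_<c m + (if m = g then 1 else 0). m) = (\<Sum>m\<in>G. \<Sum>_<c m. m) + g"
      using assms that by (simp add: sum.distrib)
    show "sum (\<lambda>m. c m + (if m = g then 1 else 0)) G = sum c G + 1"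
      using assms that by (simp add: sum.distrib)
  qed
  show ?case
  proof (intro Set.set_eqI iffI)
    fix x assume "x \<in> (\<Sum>_<Suc k. G)"
    then obtain c g where "sum c G = k" "g \<in> G" "x = (\<Sum>m\<in>G. \<Sum>_<c m. m) + g"
      unfolding sum.lessThan_Suc Suc.IH set_plus_def by blast
    then show "x \<in> {\<Sum>m\<in>G. \<Sum>_<c m. m | c. sum c G = Suc k}"
      using step[of g c] by (intro CollectI exI[of _ "\<lambda>m. c m + (if m = g then 1 else 0)"]) simp
  next
    fix x assume "x \<in> {\<Sum>m\<in>G. \<Sum>_<c m. m | c. sum c G = Suc k}"
    then obtain c where c: "sum c G = Suc k" "x = (\<Sum>m\<in>G. \<Sum>_<c m. m)"
      by blast
    then obtain g where "g \<in> G" "c g > 0"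
      by (metis gr0I sum.neutral nat.distinct(1))
    define c' where "c' m = (if m = g then c m - 1 else c m)" for m
    have "c = (\<lambda>m. c' m + (if m = g then 1 else 0))"
      using \<open>c g > 0\<close> by (auto simp: c'_def fun_eq_iff)
    then have "sum c' G = k" "x = (\<Sum>m\<in>G. \<Sum>_<c' m. m) + g"
      using c step[OF \<open>g \<in> G\<close>, of c'] by simp_all
    then show "x \<in> (\<Sum>_<Suc k. G)"
      unfolding sum.lessThan_Suc Suc.IH using \<open>g \<in> G\<close> by (auto intro: set_plus_intro)
  qed
qed

lemma lookup_Abs_poly_mapping_finite [simp]:
  "lookup (Abs_poly_mapping (f :: 'a::finite \<Rightarrow> 'b::zero)) = f"
  by (simp add: lookup_Abs_poly_mapping)

lemma mem_upper_sum_powers_iff: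
  fixes G :: "'i::finite \<Rightarrow> ('v \<Rightarrow>\<^sub>0 nat) set" and n :: "'i \<Rightarrow>\<^sub>0 nat"
  assumes "\<And>i. finite (G i)"
  shows "a \<in> (\<Sum>i\<in>UNIV. \<Sum>_<lookup n i. G i) + UNIV \<longleftrightarrow>
    (\<exists>c d. (\<forall>i. sum (c i) (G i) = lookup n i) \<and>
      (\<forall>v. lookup a v = (\<Sum>i\<in>UNIV. \<Sum>m\<in>G i. c i m * lookup m v) + lookup d v))"
    (is "_ \<longleftrightarrow> (\<exists>c d. ?P c d)")
proof
  assume "a \<in> (\<Sum>i\<in>UNIV. \<Sum>_<lookup n i. G i) + UNIV"
  then obtain x d where x: "\<forall>i. x i \<in> (\<Sum>_<lookup n i. G i)" and a: "a = (\<Sum>i\<in>UNIV. x i) + d"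
    unfolding set_plus_def set_sum_alt[OF finite_UNIV] by blast
  have "\<forall>i. \<exists>ci. sum ci (G i) = lookup n i \<and> x i = (\<Sum>m\<in>G i. \<Sum>_<ci m. m)"
    using x set_sum_const_eq_combinations[OF assms] by blast
  from choice[OF this] obtain c
    where "\<forall>i. sum (c i) (G i) = lookup n i \<and> x i = (\<Sum>m\<in>G i. \<Sum>_<c i m. m)"
    by blast
  then have "?P c d"
    unfolding a by (simp add: lookup_add lookup_sum)
  then show "\<exists>c d. ?P c d"
    by blast
next
  assume "\<exists>c d. ?P c d"
  then obtain c d where c: "\<And>i. sum (c i) (G i) = lookup n i"
    and a: "\<And>v. lookup a v = (\<Sum>i\<in>UNIV. \<Sum>m\<in>G i. c i m * lookup m v) + lookup d v"
    by blast
  define x where "x i = (\<Sum>m\<in>G i. \<Sum>_<c i m. m)" for i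
  have "x i \<in> (\<Sum>_<lookup n i. G i)" for i
    using c unfolding x_def set_sum_const_eq_combinations[OF assms] by blast
  moreover have "a = (\<Sum>i\<in>UNIV. x i) + d"
    by (rule poly_mapping_eqI) (simp add: a x_def lookup_add lookup_sum)
  ultimately show "a \<in> (\<Sum>i\<in>UNIV. \<Sum>_<lookup n i. G i) + UNIV"
    unfolding set_sum_alt[OF finite_UNIV] by (auto intro: set_plus_intro)
qed

definition rees_exps :: "('i::finite \<Rightarrow> 'j \<Rightarrow> ('v \<Rightarrow>\<^sub>0 nat) set) \<Rightarrow> (('i \<Rightarrow>\<^sub>0 nat) \<times> ('v \<Rightarrow>\<^sub>0 nat)) set" where
  "rees_exps G = {(n, a). \<forall>j. a \<in> (\<Sum>i\<in>UNIV. \<Sum>_<lookup n i. G i j) + UNIV}"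

datatype ('i, 'j, 'v) rees_var = Deg 'i | Exp 'v | Mult 'j 'i "'v \<Rightarrow>\<^sub>0 nat" | Slack 'j 'v

definition rees_vars :: "('i \<Rightarrow> 'j \<Rightarrow> ('v \<Rightarrow>\<^sub>0 nat) set) \<Rightarrow> ('i, 'j, 'v) rees_var set" where
  "rees_vars G = range Deg \<union> range Exp \<union> (\<Union>j i. Mult j i ` G i j) \<union> range (case_prod Slack)"

(* A solution t encodes the point rees_proj t of rees_exps G together with, for each j, a witness
   for a \<in> \<Sum>_i n_i G_ij + \<nat>^d: the multiplicities t (Mult j i m) of the generators m \<in> G i j
   and the remainder t (Slack j _). *)
definition rees_solutions :: "('i::finite \<Rightarrow> 'j \<Rightarrow> ('v \<Rightarrow>\<^sub>0 nat) set) \<Rightarrow> (('i, 'j, 'v) rees_var \<Rightarrow> nat) set" where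
  "rees_solutions G = {t. (\<forall>x. x \<notin> rees_vars G \<longrightarrow> t x = 0)
     \<and> (\<forall>j i. (\<Sum>m\<in>G i j. t (Mult j i m)) = t (Deg i))
     \<and> (\<forall>j v. t (Exp v) = (\<Sum>i\<in>UNIV. \<Sum>m\<in>G i j. t (Mult j i m) * lookup m v) + t (Slack j v))}"

definition rees_proj :: "(('i::finite, 'j, 'v::finite) rees_var \<Rightarrow> nat) \<Rightarrow> ('i \<Rightarrow>\<^sub>0 nat) \<times> ('v \<Rightarrow>\<^sub>0 nat)" where
  "rees_proj t = (Abs_poly_mapping (t \<circ> Deg), Abs_poly_mapping (t \<circ> Exp))"

lemma finite_rees_vars:
  fixes G :: "'i::finite \<Rightarrow> 'j::finite \<Rightarrow> ('v::finite \<Rightarrow>\<^sub>0 nat) set"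
  assumes "\<And>i j. finite (G i j)"
  shows "finite (rees_vars G)"
  using assms unfolding rees_vars_def by auto

lemma rees_proj_zero: "rees_proj 0 = 0"
  unfolding rees_proj_def by (auto intro!: poly_mapping_eqI simp: zero_prod_def)

lemma rees_proj_add: "rees_proj (s + t) = rees_proj s + rees_proj t"
  unfolding rees_proj_def by (auto intro!: poly_mapping_eqI simp: lookup_add)

lemma rees_solutionsD:
  assumes "t \<in> rees_solutions G"
  shows "x \<notin> rees_vars G \<Longrightarrow> t x = 0"
    and "(\<Sum>m\<in>G i j. t (Mult j i m)) = t (Deg i)"
    and "t (Exp v) = (\<Sum>i\<in>UNIV. \<Sum>m\<in>G i j. t (Mult j i m) * lookup m v) + t (Slack j v)"
  using assms unfolding rees_solutions_def by blast+

lemma rees_solutions_add: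
  assumes s: "s \<in> rees_solutions G" and t: "t \<in> rees_solutions G"
  shows "s + t \<in> rees_solutions G"
  unfolding rees_solutions_def
proof (intro CollectI conjI allI impI)
  show "(s + t) x = 0" if "x \<notin> rees_vars G" for x
    using rees_solutionsD(1)[OF s that] rees_solutionsD(1)[OF t that] by simp
  show "(\<Sum>m\<in>G i j. (s + t) (Mult j i m)) = (s + t) (Deg i)" for j i
    using rees_solutionsD(2)[OF s, where i = i and j = j] rees_solutionsD(2)[OF t, where i = i and j = j]
    by (simp add: sum.distrib)
  show "(s + t) (Exp v) = (\<Sum>i\<in>UNIV. \<Sum>m\<in>G i j. (s + t) (Mult j i m) * lookup m v) + (s + t) (Slack j v)" for j v
    using rees_solutionsD(3)[OF s, where j = j and v = v] rees_solutionsD(3)[OF t, where j = j and v = v]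
    by (simp add: sum.distrib algebra_simps)
qed

lemma rees_solutions_diff:
  assumes s: "s \<in> rees_solutions G" and t: "t \<in> rees_solutions G" and "s \<le> t"
  shows "t - s \<in> rees_solutions G"
  unfolding rees_solutions_def
proof (intro CollectI conjI allI impI)
  show "(t - s) x = 0" if "x \<notin> rees_vars G" for x
    using rees_solutionsD(1)[OF t that] by simp
  show "(\<Sum>m\<in>G i j. (t - s) (Mult j i m)) = (t - s) (Deg i)" for j i
    by (rule additive_eq_diff[where L = "\<lambda>u. \<Sum>m\<in>G i j. u (Mult j i m)" and R = "\<lambda>u. u (Deg i)"])
      (use rees_solutionsD(2)[OF s, where i = i and j = j] rees_solutionsD(2)[OF t, where i = i and j = j]
          \<open>s \<le> t\<close> in \<open>simp_all add: sum.distrib\<close>)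
  show "(t - s) (Exp v) = (\<Sum>i\<in>UNIV. \<Sum>m\<in>G i j. (t - s) (Mult j i m) * lookup m v) + (t - s) (Slack j v)" for j v
    by (rule additive_eq_diff[where L = "\<lambda>u. u (Exp v)"
          and R = "\<lambda>u. (\<Sum>i\<in>UNIV. \<Sum>m\<in>G i j. u (Mult j i m) * lookup m v) + u (Slack j v)"])
      (use rees_solutionsD(3)[OF s, where j = j and v = v] rees_solutionsD(3)[OF t, where j = j and v = v]
          \<open>s \<le> t\<close> in \<open>simp_all add: sum.distrib algebra_simps\<close>)
qed

lemma rees_proj_mem_rees_exps:
  fixes G :: "'i::finite \<Rightarrow> 'j \<Rightarrow> ('v::finite \<Rightarrow>\<^sub>0 nat) set"
  assumes fin: "\<And>i j. finite (G i j)" and t: "t \<in> rees_solutions G"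
  shows "rees_proj t \<in> rees_exps G"
proof -
  have "Abs_poly_mapping (t \<circ> Exp)
    \<in> (\<Sum>i\<in>UNIV. \<Sum>_<lookup (Abs_poly_mapping (t \<circ> Deg)) i. G i j) + UNIV" for j
  proof -
    have deg: "\<forall>i. sum (\<lambda>m. t (Mult j i m)) (G i j) = lookup (Abs_poly_mapping (t \<circ> Deg)) i"
      using rees_solutionsD(2)[OF t, where j = j] by simp
    have exp: "\<forall>v. lookup (Abs_poly_mapping (t \<circ> Exp)) v =
      (\<Sum>i\<in>UNIV. \<Sum>m\<in>G i j. t (Mult j i m) * lookup m v) + lookup (Abs_poly_mapping (\<lambda>v. t (Slack j v))) v"
      using rees_solutionsD(3)[OF t, where j = j] by simp
    show ?thesis
      unfolding mem_upper_sum_powers_iff[where G = "\<lambda>i. G i j", OF fin]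
      by (intro exI[of _ "\<lambda>i m. t (Mult j i m)"] exI[of _ "Abs_poly_mapping (\<lambda>v. t (Slack j v))"]
          conjI deg exp)
  qed
  then show ?thesis
    unfolding rees_proj_def rees_exps_def by simp
qed

lemma rees_exps_mem_image:
  fixes G :: "'i::finite \<Rightarrow> 'j \<Rightarrow> ('v::finite \<Rightarrow>\<^sub>0 nat) set"
  assumes fin: "\<And>i j. finite (G i j)" and "(n, a) \<in> rees_exps G"
  shows "(n, a) \<in> rees_proj ` rees_solutions G"
proof -
  have "\<forall>j. \<exists>cd. (\<forall>i. sum (fst cd i) (G i j) = lookup n i) \<and>
    (\<forall>v. lookup a v = (\<Sum>i\<in>UNIV. \<Sum>m\<in>G i j. fst cd i m * lookup m v) + lookup (snd cd) v)"
    using assms(2) unfolding rees_exps_def mem_upper_sum_powers_iff[OF fin] by simp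
  from choice[OF this] obtain cd where cd: "\<And>j. \<forall>i. sum (fst (cd j) i) (G i j) = lookup n i"
    "\<And>j. \<forall>v. lookup a v = (\<Sum>i\<in>UNIV. \<Sum>m\<in>G i j. fst (cd j) i m * lookup m v) + lookup (snd (cd j)) v"
    by blast
  define t where "t x = (case x of Deg i \<Rightarrow> lookup n i | Exp v \<Rightarrow> lookup a v
    | Mult j i m \<Rightarrow> (if m \<in> G i j then fst (cd j) i m else 0) | Slack j v \<Rightarrow> lookup (snd (cd j)) v)" for x
  have weighted: "(\<Sum>m\<in>G i j. t (Mult j i m) * f m) = (\<Sum>m\<in>G i j. fst (cd j) i m * f m)" for i j f
    by (rule sum.cong) (simp_all add: t_def)
  have t_simps: "t (Deg i) = lookup n i" "t (Exp v) = lookup a v" "t (Slack j v) = lookup (snd (cd j)) v"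
    for i v j
    by (simp_all add: t_def)
  have "t \<in> rees_solutions G"
    unfolding rees_solutions_def
  proof (intro CollectI conjI allI impI)
    show "t x = 0" if "x \<notin> rees_vars G" for x
      using that by (cases x) (force simp: t_def rees_vars_def)+
    show "(\<Sum>m\<in>G i j. t (Mult j i m)) = t (Deg i)" for j i
      using weighted[where i = i and j = j and f = "\<lambda>_. 1"] cd(1)[of j] by (simp add: t_simps)
    show "t (Exp v) = (\<Sum>i\<in>UNIV. \<Sum>m\<in>G i j. t (Mult j i m) * lookup m v) + t (Slack j v)" for j v
      using cd(2)[of j] by (simp add: t_simps weighted)
  qed
  moreover have "rees_proj t = (n, a)"
    by (simp add: rees_proj_def t_def comp_def lookup_inverse)
  ultimately show ?thesis
    by force
qed

lemma rees_exps_eq_image: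
  fixes G :: "'i::finite \<Rightarrow> 'j \<Rightarrow> ('v::finite \<Rightarrow>\<^sub>0 nat) set"
  assumes "\<And>i j. finite (G i j)"
  shows "rees_exps G = rees_proj ` rees_solutions G"
  using rees_proj_mem_rees_exps[OF assms] rees_exps_mem_image[OF assms] by auto

theorem noetherian_monoid_rees_exps:
  fixes G :: "'i::finite \<Rightarrow> 'j::finite \<Rightarrow> ('v::finite \<Rightarrow>\<^sub>0 nat) set"
  assumes "\<And>i j. finite (G i j)"
  shows "noetherian_monoid (rees_exps G)"
  unfolding rees_exps_eq_image[OF assms]
proof (rule noetherian_monoid_additive_image[where K = "rees_vars G"])
  show "finite (rees_vars G)"
    using assms by (rule finite_rees_vars)
  show "0 \<in> rees_solutions G"
    by (simp add: rees_solutions_def)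
qed (simp_all add: rees_solutionsD(1) rees_solutions_add rees_solutions_diff rees_proj_add rees_proj_zero)

section \<open>Monoid rings in two sets of variables\<close>

definition coeff2 :: "('a \<Rightarrow>\<^sub>0 'b \<Rightarrow>\<^sub>0 'k::zero) \<Rightarrow> 'a \<times> 'b \<Rightarrow> 'k" where
  "coeff2 f e = lookup (lookup f (fst e)) (snd e)"

definition keys2 :: "('a \<Rightarrow>\<^sub>0 'b \<Rightarrow>\<^sub>0 'k::zero) \<Rightarrow> ('a \<times> 'b) set" where
  "keys2 f = {e. coeff2 f e \<noteq> 0}"

definition monom2 :: "'a \<times> 'b \<Rightarrow> 'k::zero \<Rightarrow> ('a \<Rightarrow>\<^sub>0 'b \<Rightarrow>\<^sub>0 'k)" where
  "monom2 e c = Poly_Mapping.single (fst e) (Poly_Mapping.single (snd e) c)"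

lemma mem_keys2_iff: "(n, a) \<in> keys2 f \<longleftrightarrow> a \<in> keys (lookup f n)"
  by (simp add: keys2_def coeff2_def in_keys_iff)

lemma keys2_single: "keys2 (Poly_Mapping.single n p) = {n} \<times> keys p"
  by (auto simp: keys2_def coeff2_def in_keys_iff lookup_single when_def)

lemma poly2_eqI: "(\<And>e. coeff2 f e = coeff2 g e) \<Longrightarrow> f = g"
  unfolding coeff2_def by (metis fst_conv snd_conv poly_mapping_eqI)

lemma coeff2_zero [simp]: "coeff2 0 e = 0"
  by (simp add: coeff2_def)

lemma coeff2_add [simp]: "coeff2 (f + g) e = coeff2 f e + coeff2 g e"
  by (simp add: coeff2_def lookup_add)

lemma coeff2_uminus [simp]: "coeff2 (- f) e = - coeff2 f e"
  by (simp add: coeff2_def)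

lemma coeff2_sum: "coeff2 (sum f X) e = (\<Sum>x\<in>X. coeff2 (f x) e)"
  by (simp add: coeff2_def lookup_sum)

lemma coeff2_monom2: "coeff2 (monom2 e c) e' = (if e' = e then c else 0)"
  by (cases e; cases e') (auto simp: coeff2_def monom2_def lookup_single when_def)

lemma monom2_mult: "monom2 e c * monom2 e' c' = monom2 (e + e') (c * c')"
  by (simp add: monom2_def mult_single)

lemma monom2_zero [simp]: "monom2 e 0 = 0"
  by (simp add: monom2_def)

lemma monom2_add: "monom2 e (c + c') = monom2 e c + monom2 e c'"
  by (simp add: monom2_def single_add)

lemma finite_keys2: "finite (keys2 f)"
proof (rule finite_subset)
  show "keys2 f \<subseteq> Sigma (keys f) (\<lambda>a. keys (lookup f a))"
    by (auto simp: keys2_def coeff2_def in_keys_iff)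
qed simp

lemma keys2_eq_empty_iff: "keys2 f = {} \<longleftrightarrow> f = 0"
  by (auto simp: keys2_def intro: poly2_eqI)

lemma poly2_sum_monom2: "f = (\<Sum>e\<in>keys2 f. monom2 e (coeff2 f e))"
proof (rule poly2_eqI)
  fix e
  show "coeff2 f e = coeff2 (\<Sum>e\<in>keys2 f. monom2 e (coeff2 f e)) e"
    using finite_keys2[of f] by (simp add: coeff2_sum coeff2_monom2 keys2_def)
qed

lemma keys2_add: "keys2 (f + g) \<subseteq> keys2 f \<union> keys2 g"
  by (auto simp: keys2_def)

lemma keys2_uminus [simp]: "keys2 (- f) = keys2 f"
  by (simp add: keys2_def)

lemma keys2_sum: "keys2 (sum f X) \<subseteq> (\<Union>x\<in>X. keys2 (f x))"
  by (auto simp: keys2_def coeff2_sum intro: ccontr sum.neutral)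

lemma keys2_monom2: "keys2 (monom2 e c) \<subseteq> {e}"
  by (auto simp: keys2_def coeff2_monom2)

lemma keys2_mult: "keys2 (f * g) \<subseteq> keys2 f + keys2 g"
proof -
  have "f * g = (\<Sum>e\<in>keys2 f. \<Sum>e'\<in>keys2 g. monom2 (e + e') (coeff2 f e * coeff2 g e'))"
    by (subst poly2_sum_monom2[of f], subst poly2_sum_monom2[of g])
      (simp add: sum_product monom2_mult)
  also have "keys2 \<dots> \<subseteq> (\<Union>e\<in>keys2 f. \<Union>e'\<in>keys2 g. keys2 (monom2 (e + e') (coeff2 f e * coeff2 g e')))"
    by (rule order_trans[OF keys2_sum UN_mono[OF order_refl keys2_sum]])
  also have "\<dots> \<subseteq> keys2 f + keys2 g"
  proof (intro UN_least)
    fix e e' assume "e \<in> keys2 f" "e' \<in> keys2 g"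
    then show "keys2 (monom2 (e + e') (coeff2 f e * coeff2 g e')) \<subseteq> keys2 f + keys2 g"
      using keys2_monom2 set_plus_intro by blast
  qed
  finally show ?thesis .
qed

lemma mult_monom2_eq: "f * monom2 s c = (\<Sum>e\<in>keys2 f. monom2 (e + s) (coeff2 f e * c))"
  by (subst poly2_sum_monom2[of f]) (simp add: sum_distrib_right monom2_mult)

lemma coeff2_mult_monom2:
  fixes f :: "'a::cancel_comm_monoid_add \<Rightarrow>\<^sub>0 'b::cancel_comm_monoid_add \<Rightarrow>\<^sub>0 'k::comm_semiring_1"
  shows "coeff2 (f * monom2 s c) (e + s) = coeff2 f e * c"
  using finite_keys2[of f] by (simp add: mult_monom2_eq coeff2_sum coeff2_monom2 keys2_def)

lemma keys2_mult_monom2: "keys2 (f * monom2 s c) \<subseteq> (\<lambda>e. e + s) ` keys2 f"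
proof -
  have "keys2 (f * monom2 s c) \<subseteq> (\<Union>e\<in>keys2 f. keys2 (monom2 (e + s) (coeff2 f e * c)))"
    unfolding mult_monom2_eq by (rule keys2_sum)
  also have "\<dots> \<subseteq> (\<lambda>e. e + s) ` keys2 f"
    using keys2_monom2 by blast
  finally show ?thesis .
qed

definition monoid_ring :: "('a \<times> 'b) set \<Rightarrow> ('a \<Rightarrow>\<^sub>0 'b \<Rightarrow>\<^sub>0 'k::zero) set" where
  "monoid_ring S = {f. keys2 f \<subseteq> S}"

lemma monom2_in_monoid_ring: "e \<in> S \<Longrightarrow> monom2 e c \<in> monoid_ring S"
  using keys2_monom2[of e c] by (auto simp: monoid_ring_def)

lemma ring_sub_ring_struct:
  fixes A :: "'r::comm_ring_1 set"
  assumes "1 \<in> A" and "\<And>x y. x \<in> A \<Longrightarrow> y \<in> A \<Longrightarrow> x + y \<in> A"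
    and "\<And>x y. x \<in> A \<Longrightarrow> y \<in> A \<Longrightarrow> x * y \<in> A" and "\<And>x. x \<in> A \<Longrightarrow> - x \<in> A"
  shows "ring (sub_ring_struct A)"
proof -
  have "0 \<in> A"
    using assms(1,2,4) by (metis add.right_inverse)
  moreover have "\<exists>y\<in>A. y + x = 0" if "x \<in> A" for x
    using assms(4) that by (intro bexI[of _ "- x"]) simp_all
  ultimately show ?thesis
    unfolding sub_ring_struct_def using assms
    by unfold_locales (auto simp: algebra_simps Units_def)
qed

lemma ideal_sub_ring_structD:
  assumes "ideal I (sub_ring_struct A)"
  shows "I \<subseteq> A" and "0 \<in> I" and "f \<in> I \<Longrightarrow> g \<in> I \<Longrightarrow> f + g \<in> I"
    and "f \<in> I \<Longrightarrow> a \<in> A \<Longrightarrow> f * a \<in> I"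
proof -
  interpret ideal I "sub_ring_struct A"
    by (rule assms)
  show "I \<subseteq> A" "0 \<in> I" "f \<in> I \<Longrightarrow> g \<in> I \<Longrightarrow> f + g \<in> I"
    using additive_subgroup.a_subset[OF is_additive_subgroup]
      additive_subgroup.a_closed[OF is_additive_subgroup] additive_subgroup.zero_closed[OF is_additive_subgroup]
    by (simp_all add: sub_ring_struct_def)
  show "f \<in> I \<Longrightarrow> a \<in> A \<Longrightarrow> f * a \<in> I"
    using I_r_closed by (simp add: sub_ring_struct_def)
qed

lemma ring_monoid_ring:
  assumes "0 \<in> S" and "S + S \<subseteq> S"
  shows "ring (sub_ring_struct
    (monoid_ring S :: ('a::comm_monoid_add \<Rightarrow>\<^sub>0 'b::comm_monoid_add \<Rightarrow>\<^sub>0 'k::comm_ring_1) set))"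
proof (rule ring_sub_ring_struct)
  show "1 \<in> (monoid_ring S :: ('a \<Rightarrow>\<^sub>0 'b \<Rightarrow>\<^sub>0 'k) set)"
    using keys2_monom2[of 0 "1::'k"] assms(1) by (auto simp: monoid_ring_def monom2_def zero_prod_def)
  show "f * g \<in> monoid_ring S" if "f \<in> monoid_ring S" "g \<in> monoid_ring S" for f g :: "'a \<Rightarrow>\<^sub>0 'b \<Rightarrow>\<^sub>0 'k"
    using that keys2_mult[of f g] set_plus_mono2[of "keys2 f" S "keys2 g" S] assms(2)
    unfolding monoid_ring_def by blast
  show "f + g \<in> monoid_ring S" if "f \<in> monoid_ring S" "g \<in> monoid_ring S" for f g :: "'a \<Rightarrow>\<^sub>0 'b \<Rightarrow>\<^sub>0 'k"
    using that keys2_add[of f g] unfolding monoid_ring_def by blast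
qed (simp add: monoid_ring_def)

section \<open>Leading exponents\<close>

locale exponent_order =
  fixes \<mu> :: "'a::cancel_comm_monoid_add \<times> 'b::cancel_comm_monoid_add
    \<Rightarrow> 'w::{wellorder, linordered_cancel_ab_semigroup_add}"
  assumes inj_\<mu>: "inj \<mu>" and \<mu>_add: "\<mu> (e + e') = \<mu> e + \<mu> e'"
begin

definition lead_exp :: "('a \<Rightarrow>\<^sub>0 'b \<Rightarrow>\<^sub>0 'k::zero) \<Rightarrow> 'a \<times> 'b" where
  "lead_exp f = inv_into UNIV \<mu> (Max (\<mu> ` keys2 f))"

lemma Max_mu_keys2: "f \<noteq> 0 \<Longrightarrow> Max (\<mu> ` keys2 f) \<in> \<mu> ` keys2 f"
  using finite_keys2 keys2_eq_empty_iff by (intro Max_in) auto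

lemma mu_lead_exp: "f \<noteq> 0 \<Longrightarrow> \<mu> (lead_exp f) = Max (\<mu> ` keys2 f)"
  unfolding lead_exp_def by (rule f_inv_into_f) (use Max_mu_keys2 in blast)

lemma lead_exp_in_keys2: "f \<noteq> 0 \<Longrightarrow> lead_exp f \<in> keys2 f"
  using Max_mu_keys2 mu_lead_exp inj_\<mu> by (fastforce simp: inj_eq)

lemma le_lead_exp:
  assumes "e \<in> keys2 f"
  shows "\<mu> e \<le> \<mu> (lead_exp f)"
proof -
  have "f \<noteq> 0"
    using assms by (auto simp: keys2_def)
  show ?thesis
    unfolding mu_lead_exp[OF \<open>f \<noteq> 0\<close>] by (rule Max_ge) (use assms finite_keys2 in auto)
qed

lemma lead_exp_eqI:
  assumes "e \<in> keys2 f" and "\<And>e'. e' \<in> keys2 f \<Longrightarrow> \<mu> e' \<le> \<mu> e"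
  shows "lead_exp f = e"
proof -
  have "f \<noteq> 0"
    using assms(1) by (auto simp: keys2_def)
  then have "\<mu> (lead_exp f) = \<mu> e"
    using assms le_lead_exp lead_exp_in_keys2 by (meson order_antisym)
  then show ?thesis
    using inj_\<mu> by (simp add: inj_eq)
qed

lemma lead_exp_mult_monom2:
  fixes f :: "'a \<Rightarrow>\<^sub>0 'b \<Rightarrow>\<^sub>0 'k::idom"
  assumes "f \<noteq> 0" and "c \<noteq> 0"
  shows "lead_exp (f * monom2 s c) = lead_exp f + s"
proof (rule lead_exp_eqI)
  show "lead_exp f + s \<in> keys2 (f * monom2 s c)"
    using lead_exp_in_keys2[OF assms(1)] assms(2) by (simp add: keys2_def coeff2_mult_monom2)
  show "\<mu> e' \<le> \<mu> (lead_exp f + s)" if e': "e' \<in> keys2 (f * monom2 s c)" for e'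
  proof -
    obtain e where "e \<in> keys2 f" "e' = e + s"
      using e' keys2_mult_monom2 by blast
    then show ?thesis
      using le_lead_exp by (simp add: \<mu>_add add_right_mono)
  qed
qed

lemma lead_exp_cancel:
  fixes f g :: "'a \<Rightarrow>\<^sub>0 'b \<Rightarrow>\<^sub>0 'k::field"
  assumes "f \<noteq> 0" and "g \<noteq> 0" and "lead_exp g = lead_exp f"
    and h: "h = f + g * monom2 0 (- (coeff2 f (lead_exp f) / coeff2 g (lead_exp f)))"
  shows "h = 0 \<or> \<mu> (lead_exp h) < \<mu> (lead_exp f)"
proof (cases "h = 0")
  case False
  have "coeff2 g (lead_exp f) \<noteq> 0"
    using lead_exp_in_keys2[OF assms(2)] assms(3) by (simp add: keys2_def)
  then have "coeff2 h (lead_exp f) = 0"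
    using coeff2_mult_monom2[of g 0 _ "lead_exp f"] unfolding h by simp
  then have "lead_exp h \<noteq> lead_exp f"
    using lead_exp_in_keys2[OF False] by (auto simp: keys2_def)
  moreover have "lead_exp h \<in> keys2 f \<union> keys2 g"
    using lead_exp_in_keys2[OF False] keys2_add keys2_mult_monom2[of g 0] unfolding h by fastforce
  then have "\<mu> (lead_exp h) \<le> \<mu> (lead_exp f)"
    using le_lead_exp[of "lead_exp h" f] le_lead_exp[of "lead_exp h" g] assms(3) by auto
  ultimately show ?thesis
    using inj_\<mu> by (simp add: inj_eq order_less_le)
qed simp

definition lead_exps :: "('a \<Rightarrow>\<^sub>0 'b \<Rightarrow>\<^sub>0 'k::zero) set \<Rightarrow> ('a \<times> 'b) set" where
  "lead_exps I = lead_exp ` (I - {0})"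

lemma lead_exps_mono: "I \<subseteq> J \<Longrightarrow> lead_exps I \<subseteq> lead_exps J"
  by (auto simp: lead_exps_def)

lemma lead_exps_Union: "lead_exps (\<Union>C) = (\<Union>I\<in>C. lead_exps I)"
  unfolding lead_exps_def by blast

lemma lead_exps_subset:
  assumes "ideal I (sub_ring_struct (monoid_ring S))"
  shows "lead_exps I \<subseteq> S"
  using lead_exp_in_keys2 ideal_sub_ring_structD(1)[OF assms] by (force simp: lead_exps_def monoid_ring_def)

lemma lead_exps_plus:
  fixes I :: "('a \<Rightarrow>\<^sub>0 'b \<Rightarrow>\<^sub>0 'k::field) set"
  assumes "ideal I (sub_ring_struct (monoid_ring S))" and "e \<in> lead_exps I" and "s \<in> S"
  shows "e + s \<in> lead_exps I"
proof -
  obtain f where f: "f \<in> I" "f \<noteq> 0" "e = lead_exp f"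
    using assms(2) by (auto simp: lead_exps_def)
  have "f * monom2 s 1 \<in> I"
    using ideal_sub_ring_structD(4)[OF assms(1) f(1) monom2_in_monoid_ring[OF assms(3)]] .
  moreover have "coeff2 (f * monom2 s 1) (lead_exp f + s) \<noteq> 0"
    using lead_exp_in_keys2[OF f(2)] by (simp add: coeff2_mult_monom2 keys2_def)
  then have "f * monom2 s 1 \<noteq> 0"
    by auto
  ultimately show ?thesis
    using lead_exp_mult_monom2[OF f(2), of 1 s] f(3) by (force simp: lead_exps_def)
qed

lemma ideal_subset_if_lead_exps_subset:
  fixes I J :: "('a \<Rightarrow>\<^sub>0 'b \<Rightarrow>\<^sub>0 'k::field) set"
  assumes "0 \<in> S" and I: "ideal I (sub_ring_struct (monoid_ring S))"
    and J: "ideal J (sub_ring_struct (monoid_ring S))"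
    and "I \<subseteq> J" and lead: "lead_exps J \<subseteq> lead_exps I"
  shows "J \<subseteq> I"
proof -
  have "f \<in> I" if "f \<in> J" "f \<noteq> 0" "\<mu> (lead_exp f) = w" for f w
    using that
  proof (induction w arbitrary: f rule: less_induct)
    case (less w)
    obtain g where g: "g \<in> I" "g \<noteq> 0" "lead_exp g = lead_exp f"
      using lead less.prems(1,2) by (force simp: lead_exps_def)
    define c where "c = coeff2 f (lead_exp f) / coeff2 g (lead_exp f)"
    define h where "h = f + g * monom2 0 (- c)"
    have gc: "g * monom2 0 c' \<in> I" for c'
      using ideal_sub_ring_structD(4)[OF I g(1) monom2_in_monoid_ring[OF \<open>0 \<in> S\<close>]] .
    then have "h \<in> J"
      unfolding h_def using ideal_sub_ring_structD(3)[OF J] less.prems(1) \<open>I \<subseteq> J\<close> by blast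
    have "h = 0 \<or> \<mu> (lead_exp h) < w"
      using lead_exp_cancel[OF less.prems(2) g(2,3) h_def[unfolded c_def]] less.prems(3) by simp
    then have "h \<in> I"
      using less.IH \<open>h \<in> J\<close> ideal_sub_ring_structD(2)[OF I] by blast
    moreover have "f = h + g * monom2 0 c"
      unfolding h_def by (simp add: add.assoc distrib_left[symmetric] monom2_add[symmetric])
    ultimately show "f \<in> I"
      using ideal_sub_ring_structD(3)[OF I] gc by metis
  qed
  then show ?thesis
    using ideal_sub_ring_structD(2)[OF I] by blast
qed

lemma lead_exps_Union_chain:
  assumes "C \<noteq> {}" and "subset.chain A C" and "finite B" and "B \<subseteq> lead_exps (\<Union>C)"
  obtains I where "I \<in> C" and "B \<subseteq> lead_exps I"
proof -
  have "lead_exps I \<subseteq> lead_exps J \<or> lead_exps J \<subseteq> lead_exps I" if "I \<in> C" "J \<in> C" for I J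
  proof -
    have "I \<subseteq> J \<or> J \<subseteq> I"
      using assms(2) that unfolding subset_chain_def by blast
    then show ?thesis
      by (meson lead_exps_mono)
  qed
  then have "subset.chain UNIV (lead_exps ` C)"
    unfolding subset_chain_def by blast
  moreover have "B \<subseteq> \<Union>(lead_exps ` C)"
    using assms(4) by (simp only: lead_exps_Union)
  ultimately obtain L where "L \<in> lead_exps ` C" "B \<subseteq> L"
    using finite_subset_Union_chain[OF assms(3)] assms(1) by (metis image_is_empty)
  then show ?thesis
    using that by blast
qed

theorem noetherian_ring_monoid_ring:
  assumes "noetherian_monoid S"
  shows "noetherian_ring (sub_ring_struct (monoid_ring S :: ('a \<Rightarrow>\<^sub>0 'b \<Rightarrow>\<^sub>0 'k::field) set))"
    (is "noetherian_ring ?R")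
proof -
  have "0 \<in> S" "S + S \<subseteq> S" and fg: "\<And>E. E \<subseteq> S \<Longrightarrow> \<exists>B\<subseteq>E. finite B \<and> E \<subseteq> B + S"
    using assms by (auto simp: noetherian_monoid_def)
  then have "ring ?R"
    by (intro ring_monoid_ring)
  then show ?thesis
  proof (rule ring.trivial_ideal_chain_imp_noetherian)
    fix C assume "C \<noteq> {}" and chain: "subset.chain {I. ideal I ?R} C"
    have ideals: "\<And>I. I \<in> C \<Longrightarrow> ideal I ?R"
      using chain by (auto simp: subset_chain_def)
    have U: "ideal (\<Union>C) ?R"
      using ring.chain_Union_is_ideal[OF \<open>ring ?R\<close> chain] \<open>C \<noteq> {}\<close> by simp
    obtain B where B: "B \<subseteq> lead_exps (\<Union>C)" "finite B" "lead_exps (\<Union>C) \<subseteq> B + S"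
      using fg[OF lead_exps_subset[OF U]] by blast
    obtain I0 where I0: "I0 \<in> C" "B \<subseteq> lead_exps I0"
      using lead_exps_Union_chain[OF \<open>C \<noteq> {}\<close> chain B(2,1)] by blast
    have "lead_exps (\<Union>C) \<subseteq> lead_exps I0"
    proof
      fix e assume "e \<in> lead_exps (\<Union>C)"
      then obtain b s where "b \<in> B" "s \<in> S" "e = b + s"
        using B(3) by (auto simp: set_plus_def)
      then show "e \<in> lead_exps I0"
        using lead_exps_plus[OF ideals[OF I0(1)]] I0(2) by blast
    qed
    then have "\<Union>C \<subseteq> I0"
      using ideal_subset_if_lead_exps_subset[OF \<open>0 \<in> S\<close> ideals[OF I0(1)] U] I0(1) by blast
    then show "\<Union>C \<in> C"
      using I0(1) by (metis Sup_upper subset_antisym)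
  qed
qed

end

(* The multiset order on nat multisets is a well-order compatible with +, so this injective
   additive map serves as a monomial order. *)
definition exps_mset :: "('i::finite \<Rightarrow>\<^sub>0 nat) \<times> ('v::finite \<Rightarrow>\<^sub>0 nat) \<Rightarrow> nat multiset" where
  "exps_mset e = (\<Sum>y\<in>UNIV. replicate_mset (case_sum (lookup (fst e)) (lookup (snd e)) y) (to_nat y))"

lemma count_exps_mset: "count (exps_mset e) (to_nat y) = case_sum (lookup (fst e)) (lookup (snd e)) y"
  by (simp add: exps_mset_def count_sum)

lemma exponent_order_exps_mset:
  "exponent_order (exps_mset :: ('i::finite \<Rightarrow>\<^sub>0 nat) \<times> ('v::finite \<Rightarrow>\<^sub>0 nat) \<Rightarrow> nat multiset)"
proof
  show "inj (exps_mset :: ('i \<Rightarrow>\<^sub>0 nat) \<times> ('v \<Rightarrow>\<^sub>0 nat) \<Rightarrow> nat multiset)"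
  proof (rule injI)
    fix e e' :: "('i \<Rightarrow>\<^sub>0 nat) \<times> ('v \<Rightarrow>\<^sub>0 nat)"
    assume "exps_mset e = exps_mset e'"
    then have "case_sum (lookup (fst e)) (lookup (snd e)) y =
      case_sum (lookup (fst e')) (lookup (snd e')) y" for y
      by (metis count_exps_mset)
    from this[of "Inl _"] this[of "Inr _"] show "e = e'"
      by (simp add: prod_eq_iff poly_mapping_eqI)
  qed
  show "exps_mset (e + e') = exps_mset e + exps_mset e'" for e e' :: "('i \<Rightarrow>\<^sub>0 nat) \<times> ('v \<Rightarrow>\<^sub>0 nat)"
  proof (rule multiset_eqI)
    fix x
    have "case_sum (lookup (fst (e + e'))) (lookup (snd (e + e'))) y =
      case_sum (lookup (fst e)) (lookup (snd e)) y + case_sum (lookup (fst e')) (lookup (snd e')) y" for y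
      by (cases y) (simp_all add: lookup_add)
    then show "count (exps_mset (e + e')) x = count (exps_mset e + exps_mset e') x"
      by (auto simp: exps_mset_def count_sum sum.distrib[symmetric] intro!: sum.cong)
  qed
qed

section \<open>The Rees algebra\<close>

lemma rees_alg_eq_monoid_ring:
  fixes F :: "'i::finite \<Rightarrow> 'j \<Rightarrow> ('v, 'k::field) mpoly set"
  assumes "\<And>i j. F i j = exponent_ideal (G i j)"
  shows "rees_alg F = monoid_ring (rees_exps G)"
proof -
  have "f \<in> rees_alg F \<longleftrightarrow> keys2 f \<subseteq> rees_exps G" for f
  proof -
    have "f \<in> rees_alg F \<longleftrightarrow>
      (\<forall>n a j. a \<in> keys (lookup f n) \<longrightarrow> a \<in> (\<Sum>i\<in>UNIV. \<Sum>_<lookup n i. G i j) + UNIV)"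
      unfolding rees_alg_def multi_pow_exponent_ideal[where F = F and G = G, OF assms] exponent_ideal_def
      by blast
    also have "\<dots> \<longleftrightarrow> keys2 f \<subseteq> rees_exps G"
      by (simp add: subset_iff mem_keys2_iff rees_exps_def)
    finally show ?thesis .
  qed
  then show ?thesis
    unfolding monoid_ring_def by blast
qed

theorem proposition6p1:
  fixes F :: "'i::finite \<Rightarrow> 'j::finite \<Rightarrow> ('v::finite, 'k::field) mpoly set"
  assumes "\<And>i j. monomial_ideal (F i j)"
  shows "(\<forall>a. Poly_Mapping.single 0 a \<in> rees_alg F)
    \<and> (\<forall>f\<in>rees_alg F. \<forall>n. Poly_Mapping.single n (Poly_Mapping.lookup f n) \<in> rees_alg F)
    \<and> noetherian_ring (sub_ring_struct (rees_alg F))"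
proof -
  have "\<forall>ij. \<exists>G. finite G \<and> F (fst ij) (snd ij) = exponent_ideal G"
    using monomial_ideal_finite_exponents[OF assms] by blast
  from choice[OF this] obtain G
    where G: "\<And>i j. finite (G (i, j))" "\<And>i j. F i j = exponent_ideal (G (i, j))"
    by (metis fst_conv snd_conv)
  have rees: "rees_alg F = monoid_ring (rees_exps (\<lambda>i j. G (i, j)))"
    using G(2) by (rule rees_alg_eq_monoid_ring)
  have "(0, a) \<in> rees_exps (\<lambda>i j. G (i, j))" for a
    by (simp add: rees_exps_def del: set_zero)
  then have "Poly_Mapping.single 0 a \<in> rees_alg F" for a
    unfolding rees monoid_ring_def by (auto simp: keys2_single)
  moreover have "Poly_Mapping.single n (lookup f n) \<in> rees_alg F" if "f \<in> rees_alg F" for f n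
    using that unfolding rees monoid_ring_def by (auto simp: keys2_single mem_keys2_iff)
  moreover have "noetherian_ring (sub_ring_struct (rees_alg F))"
    unfolding rees using exponent_order_exps_mset noetherian_monoid_rees_exps[OF G(1)]
    by (rule exponent_order.noetherian_ring_monoid_ring)
  ultimately show ?thesis
    by blast
qed

end
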